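(* Let $\varepsilon>0$ be fixed. Let $G=(V,E)$ be a directed graph with positive integer vertex weights $w:V\to\mathbb{N}$ and root $r\in V$, and let $\kappa$ be the minimum weight of a vertex $r$-cut. Suppose the in-neighborhood of every vertex $v\neq r$ has total weight greater than $(1+\varepsilon)\kappa$. Then the sink component of a minimum vertex $r$-cut has total weight greater than $\varepsilon\kappa$.
   Context: For $S\subseteq V$, $N^-(S)=\{u\in V\setminus S: (u,v)\in E\text{ for some } v\in S\}$; the in-neighborhood of $v$ is $N^-(\{v\})$. A vertex $r$-cut is a set $N^-(S)$ for nonempty $S\subseteq V\setminus\{r\}$ with $r\notin N^-(S)$; $S$ is its sink component and its weight is $\sum_{u\in N^-(S)}w(u)$. *)

theory Defs
  imports Complex_Main
begin

definition in_nbhd :: "'a set \<Rightarrow> ('a \<times> 'a) set \<Rightarrow> 'a set \<Rightarrow> 'a set" where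
  "in_nbhd V E S = {u \<in> V - S. \<exists>v\<in>S. (u, v) \<in> E}"

text \<open>S is the sink component of a vertex r-cut (namely of in_nbhd V E S).\<close>
definition is_sink_comp :: "'a set \<Rightarrow> ('a \<times> 'a) set \<Rightarrow> 'a \<Rightarrow> 'a set \<Rightarrow> bool" where
  "is_sink_comp V E r S \<longleftrightarrow> S \<noteq> {} \<and> S \<subseteq> V - {r} \<and> r \<notin> in_nbhd V E S"

definition is_vertex_cut :: "'a set \<Rightarrow> ('a \<times> 'a) set \<Rightarrow> 'a \<Rightarrow> 'a set \<Rightarrow> bool" where
  "is_vertex_cut V E r C \<longleftrightarrow> (\<exists>S. is_sink_comp V E r S \<and> C = in_nbhd V E S)"

definition weight :: "('a \<Rightarrow> nat) \<Rightarrow> 'a set \<Rightarrow> nat" where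
  "weight w A = (\<Sum>u\<in>A. w u)"

end

theory Submission
  imports Defs
begin

text \<open>Every in-neighbour of a vertex v of the sink component S lies either in the cut
  N(S) or in S itself, so w(N(v)) \<le> \<kappa> + w(S); combined with w(N(v)) > (1 + \<epsilon>)\<kappa>
  this gives w(S) > \<epsilon>\<kappa>.\<close>

lemma weight_mono:
  assumes "finite B" and "A \<subseteq> B"
  shows "weight w A \<le> weight w B"
  unfolding weight_def using assms by (rule sum_mono2) simp

lemma weight_Un_le: "weight w (A \<union> B) \<le> weight w A + weight w B"
proof (cases "finite A \<and> finite B")
  case True
  then show ?thesis unfolding weight_def by (simp add: sum_Un_nat)
next
  case False
  then have "infinite (A \<union> B)" by simp
  then show ?thesis unfolding weight_def by simp
qed

lemma in_nbhd_subset: "in_nbhd V E S \<subseteq> V"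
  unfolding in_nbhd_def by blast

lemma in_nbhd_singleton_subset:
  assumes "v \<in> S"
  shows "in_nbhd V E {v} \<subseteq> in_nbhd V E S \<union> S"
  using assms unfolding in_nbhd_def by blast

lemma weight_in_nbhd_singleton_le:
  assumes "finite V" and "S \<subseteq> V" and "v \<in> S"
  shows "weight w (in_nbhd V E {v}) \<le> weight w (in_nbhd V E S) + weight w S"
proof -
  have "finite (in_nbhd V E S \<union> S)"
    using assms(1,2) in_nbhd_subset by (meson finite_UnI finite_subset)
  then have "weight w (in_nbhd V E {v}) \<le> weight w (in_nbhd V E S \<union> S)"
    using in_nbhd_singleton_subset[OF assms(3)] by (rule weight_mono)
  also have "\<dots> \<le> weight w (in_nbhd V E S) + weight w S"
    by (rule weight_Un_le)
  finally show ?thesis .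
qed

theorem lemma3p1:
  fixes V :: "'a set" and E :: "('a \<times> 'a) set" and r :: 'a
    and w :: "'a \<Rightarrow> nat" and \<kappa> :: nat and \<epsilon> :: real
  assumes eps: "\<epsilon> > 0"
    and finV: "finite V"
    and EV: "E \<subseteq> V \<times> V"
    and rV: "r \<in> V"
    and wpos: "\<forall>v\<in>V. w v > 0"
    and kappa_attained: "\<exists>C. is_vertex_cut V E r C \<and> weight w C = \<kappa>"
    and kappa_min: "\<forall>C. is_vertex_cut V E r C \<longrightarrow> \<kappa> \<le> weight w C"
    and indeg: "\<forall>v\<in>V - {r}. real (weight w (in_nbhd V E {v})) > (1 + \<epsilon>) * real \<kappa>"
  shows "\<forall>S. is_sink_comp V E r S \<and> weight w (in_nbhd V E S) = \<kappa>
           \<longrightarrow> real (weight w S) > \<epsilon> * real \<kappa>"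
proof (intro allI impI)
  fix S assume "is_sink_comp V E r S \<and> weight w (in_nbhd V E S) = \<kappa>"
  then obtain v where v: "v \<in> S" and SV: "S \<subseteq> V - {r}" and cut: "weight w (in_nbhd V E S) = \<kappa>"
    unfolding is_sink_comp_def by blast
  have "weight w (in_nbhd V E {v}) \<le> \<kappa> + weight w S"
    using weight_in_nbhd_singleton_le[OF finV _ v] SV cut by blast
  moreover have "real (weight w (in_nbhd V E {v})) > (1 + \<epsilon>) * real \<kappa>"
    using indeg v SV by blast
  ultimately show "real (weight w S) > \<epsilon> * real \<kappa>"
    by (simp add: algebra_simps)
qed

end
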